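(* (a) If $\mathcal{T}_1=(V,\mathsf{p}_1)$ and $\mathcal{T}_2=(V,\mathsf{p}_2)$ are directed forests, then $\mathcal{T}_1$ is thinner than $\mathcal{T}_2$ if and only if $\mathrm{Chi}_{\mathcal{T}_1}(v)\subseteq\mathrm{Chi}_{\mathcal{T}_2}(v)$ for every $v\in V$. (b) Thickness ("thinner than") is a partial order on the set of all directed forests with a fixed set of vertices $V$. (c) The degenerate forest $(V,\mathrm{id}_V)$ is the smallest element with respect to this partial order among directed forests with vertex set $V$. (d) The maximal elements with respect to this partial order are precisely the directed trees and the rootless directed forests.
   Context: A directed forest is a pair $\mathcal{T}=(V,\mathsf{p})$ where $V$ is a nonempty set and $\mathsf{p}\colon V\to V$ satisfies: if $n\in\mathbb{N}$, $v\in V$ and $\mathsf{p}^n(v)=v$, then $\mathsf{p}(v)=v$. Roots: $\mathrm{root}(\mathcal{T})=\{v:\mathsf{p}(v)=v\}$; $\mathcal{T}$ is rootless if it has no roots. Children: $\mathrm{Chi}_{\mathcal{T}}(v)=\{u\in V:\mathsf{p}(u)=v\neq u\}$. The trees of $\mathcal{T}$ are the connected components of the graph with vertex set $V$ and edges $\{\mathsf{p}(u),u\}$ for $u\notin\mathrm{root}(\mathcal{T})$ (equivalently, classes of the relation $u\sim w$ iff $\mathsf{p}^m(u)=\mathsf{p}^n(w)$ for some $m,n\geq0$). A directed tree is a directed forest having exactly one tree. For directed forests $\mathcal{T}_1=(V,\mathsf{p}_1)$, $\mathcal{T}_2=(V,\mathsf{p}_2)$ on the same vertex set, $\mathcal{T}_1$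 is thinner than $\mathcal{T}_2$ ($\mathcal{T}_2$ thicker than $\mathcal{T}_1$) if $\mathsf{p}_1(v)\in\{v,\mathsf{p}_2(v)\}$ for all $v\in V$. *)

theory Defs
  imports Main
begin

text \<open>A directed forest on the vertex set given by the type 'a (the vertex set V is
  represented as the universe of the type 'a, hence automatically nonempty).\<close>
definition directed_forest :: "('a \<Rightarrow> 'a) \<Rightarrow> bool" where
  "directed_forest p \<longleftrightarrow> (\<forall>n::nat. \<forall>v. n \<ge> 1 \<longrightarrow> (p ^^ n) v = v \<longrightarrow> p v = v)"

definition roots :: "('a \<Rightarrow> 'a) \<Rightarrow> 'a set" where
  "roots p = {v. p v = v}"

definition rootless :: "('a \<Rightarrow> 'a) \<Rightarrow> bool" where
  "rootless p \<longleftrightarrow> roots p = {}"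

definition Chi :: "('a \<Rightarrow> 'a) \<Rightarrow> 'a \<Rightarrow> 'a set" where
  "Chi p v = {u. p u = v \<and> v \<noteq> u}"

definition same_tree :: "('a \<Rightarrow> 'a) \<Rightarrow> ('a \<times> 'a) set" where
  "same_tree p = {(u, w). \<exists>m n. (p ^^ m) u = (p ^^ n) w}"

definition trees :: "('a \<Rightarrow> 'a) \<Rightarrow> 'a set set" where
  "trees p = UNIV // same_tree p"

definition directed_tree :: "('a \<Rightarrow> 'a) \<Rightarrow> bool" where
  "directed_tree p \<longleftrightarrow> directed_forest p \<and> (\<exists>T. trees p = {T})"

definition thinner :: "('a \<Rightarrow> 'a) \<Rightarrow> ('a \<Rightarrow> 'a) \<Rightarrow> bool" where
  "thinner p1 p2 \<longleftrightarrow> (\<forall>v. p1 v \<in> {v, p2 v})"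

definition thinner_rel :: "(('a \<Rightarrow> 'a) \<times> ('a \<Rightarrow> 'a)) set" where
  "thinner_rel = {(p1, p2). directed_forest p1 \<and> directed_forest p2 \<and> thinner p1 p2}"

end

theory Submission
  imports Defs
begin

text \<open>A thinner forest arises from a thicker one by turning some vertices into roots, so a
  forest is maximal iff none of its roots can be given a new parent; in particular rootless
  forests are maximal. In a tree every vertex reaches the root \<open>r\<close> along parent links that
  any thicker forest keeps, so a new parent of \<open>r\<close> would close a cycle. Conversely, if some
  vertex \<open>y\<close> does not reach a root \<open>r\<close>, then making \<open>y\<close> the parent of \<open>r\<close> creates no
  cycle and yields a strictly thicker forest.\<close>

lemma funpow_fixed: "f x = x \<Longrightarrow> (f ^^ n) x = x"
  by (induction n) auto

lemma funpow_commute: "(f ^^ m) ((f ^^ n) x) = (f ^^ n) ((f ^^ m) x)"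
  by (metis add.commute comp_apply funpow_add)

lemma funpow_eq_if_agree_on_orbit:
  "(\<And>k. k < n \<Longrightarrow> g ((f ^^ k) v) = f ((f ^^ k) v)) \<Longrightarrow> (g ^^ n) v = (f ^^ n) v"
  by (induction n) auto

lemma directed_forestD: "directed_forest p \<Longrightarrow> (p ^^ Suc n) v = v \<Longrightarrow> p v = v"
  unfolding directed_forest_def by (auto simp del: funpow.simps)

lemma directed_tree_iff:
  "directed_tree p \<longleftrightarrow> directed_forest p \<and> (\<forall>u w. (u, w) \<in> same_tree p)"
proof -
  have refl: "(u, u) \<in> same_tree p" for u
    unfolding same_tree_def by blast
  have "(\<exists>T. UNIV // same_tree p = {T}) \<longleftrightarrow> (\<forall>u w. (u, w) \<in> same_tree p)"
  proof
    assume "\<exists>T. UNIV // same_tree p = {T}"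
    then have "same_tree p `` {u} = same_tree p `` {w}" for u w
      by (metis UNIV_I quotientI singletonD)
    then show "\<forall>u w. (u, w) \<in> same_tree p"
      using refl by blast
  next
    assume "\<forall>u w. (u, w) \<in> same_tree p"
    then have "UNIV // same_tree p = {UNIV}"
      unfolding quotient_def by auto
    then show "\<exists>T. UNIV // same_tree p = {T}" ..
  qed
  then show ?thesis
    unfolding directed_tree_def trees_def by blast
qed

lemma thinner_non_root: "thinner p q \<Longrightarrow> p v \<noteq> v \<Longrightarrow> q v = p v"
  unfolding thinner_def by auto

lemma thinner_iff_Chi_subset: "thinner p q \<longleftrightarrow> (\<forall>v. Chi p v \<subseteq> Chi q v)"
proof
  assume "thinner p q"
  then show "\<forall>v. Chi p v \<subseteq> Chi q v"
    unfolding Chi_def using thinner_non_root by fastforce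
next
  assume subset: "\<forall>v. Chi p v \<subseteq> Chi q v"
  have "q u = p u" if "p u \<noteq> u" for u
    using that subset[rule_format, of "p u"] unfolding Chi_def by blast
  then show "thinner p q"
    unfolding thinner_def by (metis insertCI)
qed

lemma thinner_refl: "thinner p p"
  unfolding thinner_def by simp

lemma thinner_trans: "thinner p q \<Longrightarrow> thinner q r \<Longrightarrow> thinner p r"
  unfolding thinner_def by (metis insert_iff singletonD)

lemma thinner_antisym: "thinner p q \<Longrightarrow> thinner q p \<Longrightarrow> p = q"
  unfolding thinner_def fun_eq_iff by (metis insert_iff singletonD)

lemma partial_order_on_thinner_rel: "partial_order_on {p. directed_forest p} thinner_rel"
  unfolding partial_order_on_def preorder_on_def refl_on_def trans_def antisym_def thinner_rel_def
  by (auto intro: thinner_refl thinner_trans thinner_antisym)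

lemma directed_forest_id: "directed_forest id"
  unfolding directed_forest_def by simp

lemma thinner_id: "thinner id p"
  unfolding thinner_def by simp

lemma rootless_thinner_eq: "rootless p \<Longrightarrow> thinner p q \<Longrightarrow> q = p"
  unfolding rootless_def roots_def by (auto intro: ext thinner_non_root)

lemma thinner_reaches_root:
  assumes thinner: "thinner p q" and root: "p r = r" and reach: "(p ^^ m) u = r"
  shows "\<exists>k. (q ^^ k) u = r"
  using reach
proof (induction m arbitrary: u)
  case 0
  then show ?case
    by (metis funpow_0)
next
  case (Suc m)
  show ?case
  proof (cases "p u = u")
    case True
    then show ?thesis
      using Suc.prems funpow_fixed by (metis funpow_0)
  next
    case False
    have "(p ^^ m) (p u) = r"
      using Suc.prems by (simp add: funpow_Suc_right del: funpow.simps)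
    then obtain k where "(q ^^ k) (p u) = r"
      using Suc.IH by blast
    then have "(q ^^ Suc k) u = r"
      using thinner_non_root[OF thinner False] by (simp add: funpow_Suc_right del: funpow.simps)
    then show ?thesis ..
  qed
qed

lemma directed_tree_thinner_eq:
  assumes tree: "directed_tree p" and forest: "directed_forest q" and thinner: "thinner p q"
  shows "q = p"
proof (rule ext, rule ccontr)
  fix v
  assume changed: "q v \<noteq> p v"
  then have root: "p v = v"
    using thinner_non_root[OF thinner, of v] by argo
  from tree have "(q v, v) \<in> same_tree p"
    by (simp add: directed_tree_iff)
  then obtain m n where "(p ^^ m) (q v) = (p ^^ n) v"
    unfolding same_tree_def by blast
  then have "(p ^^ m) (q v) = v"
    by (simp add: funpow_fixed[of p v, OF root])
  then obtain k where "(q ^^ k) (q v) = v"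
    using thinner_reaches_root[OF thinner root] by blast
  then have "(q ^^ Suc k) v = v"
    by (simp add: funpow_Suc_right del: funpow.simps)
  then have "q v = v"
    using directed_forestD[OF forest] by blast
  with changed root show False
    by simp
qed

lemma directed_forest_fun_upd_root:
  assumes forest: "directed_forest p" and root: "p x = x"
    and avoid: "\<And>n. (p ^^ n) y \<noteq> x"
  shows "directed_forest (p(x := y))"
  unfolding directed_forest_def
proof (intro allI impI)
  fix n :: nat and v
  let ?q = "p(x := y)"
  assume "n \<ge> 1" and cycle: "(?q ^^ n) v = v"
  then obtain n' where n: "n = Suc n'"
    by (cases n) auto
  show "?q v = v"
  proof (cases "\<exists>k<n. (?q ^^ k) v = x")
    case True
    then obtain k where k: "(?q ^^ k) v = x"
      by blast
    \<comment> \<open>then \<open>x\<close> lies on a \<open>?q\<close>-cycle, but after one step the \<open>?q\<close>-orbit of \<open>x\<close> is the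
      \<open>p\<close>-orbit of \<open>y\<close>\<close>
    have "(?q ^^ n) ((?q ^^ k) v) = (?q ^^ k) ((?q ^^ n) v)"
      by (rule funpow_commute)
    then have "(?q ^^ n) x = x"
      using cycle k by simp
    moreover have "(?q ^^ n') y = (p ^^ n') y"
      by (rule funpow_eq_if_agree_on_orbit) (simp add: avoid)
    ultimately have "(p ^^ n') y = x"
      by (simp add: n funpow_Suc_right del: funpow.simps)
    with avoid show ?thesis
      by blast
  next
    case False
    then have "(p ^^ n) v = (?q ^^ n) v"
      by (intro funpow_eq_if_agree_on_orbit) auto
    with cycle have "p v = v"
      using directed_forestD[OF forest] n by simp
    moreover have "v \<noteq> x"
      using False n by (metis funpow_0 zero_less_Suc)
    ultimately show ?thesis
      by simp
  qed
qed

lemma maximal_directed_forest_tree_or_rootless: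
  assumes forest: "directed_forest p"
    and maximal: "\<And>q. directed_forest q \<Longrightarrow> thinner p q \<Longrightarrow> q = p"
  shows "directed_tree p \<or> rootless p"
proof (cases "rootless p")
  case False
  then obtain x where root: "p x = x"
    unfolding rootless_def roots_def by auto
  have reach: "\<exists>n. (p ^^ n) y = x" for y
  proof (rule ccontr)
    assume avoid: "\<nexists>n. (p ^^ n) y = x"
    then have "directed_forest (p(x := y))"
      using directed_forest_fun_upd_root[OF forest root] by blast
    moreover have "thinner p (p(x := y))"
      using root unfolding thinner_def by simp
    ultimately have "p(x := y) = p"
      by (rule maximal)
    then have "(p ^^ 0) y = x"
      using root fun_upd_same[of p x y] by simp
    with avoid show False
      by blast
  qed
  have "(u, w) \<in> same_tree p" for u w
  proof -
    obtain m n where "(p ^^ m) u = x" "(p ^^ n) w = x"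
      using reach by blast
    then have "(p ^^ m) u = (p ^^ n) w"
      by simp
    then show ?thesis
      unfolding same_tree_def by blast
  qed
  with forest show ?thesis
    by (simp add: directed_tree_iff)
qed simp

theorem theorem3p5:
  shows
  "(\<forall>p1 p2 :: 'a \<Rightarrow> 'a. directed_forest p1 \<longrightarrow> directed_forest p2 \<longrightarrow>
      (thinner p1 p2 \<longleftrightarrow> (\<forall>v. Chi p1 v \<subseteq> Chi p2 v)))
   \<and> partial_order_on {p :: 'a \<Rightarrow> 'a. directed_forest p} thinner_rel
   \<and> (directed_forest (id :: 'a \<Rightarrow> 'a) \<and>
      (\<forall>p :: 'a \<Rightarrow> 'a. directed_forest p \<longrightarrow> thinner id p))
   \<and> (\<forall>p :: 'a \<Rightarrow> 'a. directed_forest p \<longrightarrow>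
      ((\<forall>q. directed_forest q \<longrightarrow> thinner p q \<longrightarrow> q = p) \<longleftrightarrow>
       (directed_tree p \<or> rootless p)))"
proof (intro conjI allI impI)
  fix p :: "'a \<Rightarrow> 'a"
  assume "directed_forest p"
  then show "(\<forall>q. directed_forest q \<longrightarrow> thinner p q \<longrightarrow> q = p) \<longleftrightarrow>
    (directed_tree p \<or> rootless p)"
    using maximal_directed_forest_tree_or_rootless directed_tree_thinner_eq
      rootless_thinner_eq by metis
qed (rule thinner_iff_Chi_subset partial_order_on_thinner_rel directed_forest_id thinner_id)+

end
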